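(* Let $L>0$, $N\ge 5$ an integer, $h=L/N$, $x_i=y_i=-\tfrac L2+ih$ for $i=0,\dots,N-1$, $\tau>0$, $p,q\in\mathbb{R}$. Let $\Gamma$ be an $L$-periodic function (extended periodically, i.e. $\Gamma(\xi)$ is evaluated as $\Gamma(((\xi+\tfrac L2)\bmod L)-\tfrac L2)$) with $\Gamma(-\xi)=\overline{\Gamma(\xi)}$, and write $\Gamma_{i,j}=\Gamma(x_i-y_j)$. Let $C$ be the $N\times N$ real symmetric circulant matrix of the fourth-order central difference second derivative with periodic boundary conditions, $(Cf)_i=\frac{-f_{i+2}+16f_{i+1}-30f_i+16f_{i-1}-f_{i-2}}{12h^2}$ (indices mod $N$), and for an $N\times N$ array $U$ define $(\mathfrak{D}_H U)_{i,j}=\sum_k C_{ik}U_{k,j}-\sum_k C_{jk}U_{i,k}$. Given an $N\times N$ Hermitian array $U^0$ ($U^0_{i,j}=\overline{U^0_{j,i}}$) and a real antisymmetric array $\Phi^{-1/2}$, define for $n\ge 0$ \[ \Phi^{n+\frac12}_{i,j}=2\bigl(U^n_{i,i}-U^n_{j,j}\bigr)-\Phi^{n-\frac12}_{i,j}, \] $U^{n+\frac12}$ as the solution of \[ U^{n+\frac12}_{i,j}-\tfrac{ip\tau}{2}(\mathfrak{D}_H U^{n+\frac12})_{i,j}-\tfrac{iq\tau}{2}\Phi^{n+\frac12}_{i,j}U^{n+\frac12}_{i,j}=U^n_{i,j}+\tfrac{iq\tau}{2}\Gamma_{i,j}\Phi^{n+\frac12}_{i,j}, \] and $U^{n+1}_{i,j}=2U^{n+\frac12}_{i,j}-U^n_{i,j}$.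 Let \[ I_0[U^n]=h^2\sum_{i=0}^{N-1}\sum_{j=0}^{N-1}\bigl|\Gamma_{i,j}+U^n_{i,j}\bigr|^2,\qquad I_1[U^n]=h\sum_{i=0}^{N-1}U^n_{i,i}. \] Then $I_0[U^{n+1}]=I_0[U^n]$ and $I_1[U^{n+1}]=I_1[U^n]$ for all $n\ge 0$.
   Context: This is the fully discrete relaxation–Crank–Nicolson scheme (fourth-order finite differences in space with periodic boundary conditions) for the equation $i\partial_t u+p(\Delta_x-\Delta_y)u+q(u(x,x,t)-u(y,y,t))(\Gamma(x-y)+u)=0$ on $[-\tfrac L2,\tfrac L2]^2$; $U^n_{i,j}$ approximates $u(x_i,y_j,n\tau)$ and $\Phi^{n+1/2}_{i,j}$ approximates $u(x_i,x_i,t)-u(y_j,y_j,t)$ at $t=(n+\tfrac12)\tau$. *)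

theory Defs
  imports Complex_Main
begin

definition grid :: "real \<Rightarrow> real \<Rightarrow> nat \<Rightarrow> real" where
  "grid L h i = - L / 2 + real i * h"

definition rmod :: "real \<Rightarrow> real \<Rightarrow> real" where
  "rmod a b = a - b * of_int \<lfloor>a / b\<rfloor>"

definition per_eval :: "real \<Rightarrow> (real \<Rightarrow> complex) \<Rightarrow> real \<Rightarrow> complex" where
  "per_eval L G \<xi> = G (rmod (\<xi> + L / 2) L - L / 2)"

definition Gam :: "real \<Rightarrow> real \<Rightarrow> (real \<Rightarrow> complex) \<Rightarrow> nat \<Rightarrow> nat \<Rightarrow> complex" where
  "Gam L h G i j = per_eval L G (grid L h i - grid L h j)"

definition Cmat :: "nat \<Rightarrow> real \<Rightarrow> nat \<Rightarrow> nat \<Rightarrow> real" where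
  "Cmat N h i k =
     ( - (if k = (i + 2) mod N then 1 else 0)
       + 16 * (if k = (i + 1) mod N then 1 else 0)
       - 30 * (if k = i mod N then 1 else 0)
       + 16 * (if k = (i + N - 1) mod N then 1 else 0)
       - (if k = (i + N - 2) mod N then 1 else 0)) / (12 * h\<^sup>2)"

definition DH :: "nat \<Rightarrow> real \<Rightarrow> (nat \<Rightarrow> nat \<Rightarrow> complex) \<Rightarrow> nat \<Rightarrow> nat \<Rightarrow> complex" where
  "DH N h U i j = (\<Sum>k<N. complex_of_real (Cmat N h i k) * U k j)
                - (\<Sum>k<N. complex_of_real (Cmat N h j k) * U i k)"

definition I0 :: "nat \<Rightarrow> real \<Rightarrow> real \<Rightarrow> (real \<Rightarrow> complex) \<Rightarrow> (nat \<Rightarrow> nat \<Rightarrow> complex) \<Rightarrow> real" where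
  "I0 N L h G U = h\<^sup>2 * (\<Sum>i<N. \<Sum>j<N. (cmod (Gam L h G i j + U i j))\<^sup>2)"

definition I1 :: "nat \<Rightarrow> real \<Rightarrow> (nat \<Rightarrow> nat \<Rightarrow> complex) \<Rightarrow> complex" where
  "I1 N h U = complex_of_real h * (\<Sum>i<N. U i i)"

end

(*
  Each half step solves A W = U + i b (Gamma o Phi) for the operator
  A X = X - i a [C, X] - i b (Phi o X), where o is the entrywise product,
  a = p tau/2 and b = q tau/2.  For real symmetric C and real Phi the
  Frobenius product satisfies Re <A X, X> = |X|^2, so A is injective; since A
  commutes with conjugate transposition when Phi is antisymmetric, the scheme
  keeps U Hermitian and Phi real antisymmetric.  Writing V = Gamma + W and
  E = W - U = i a [C, W] + i b (Phi o V), the new and old energies differ by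
  the sum of |V + E|^2 - |V - E|^2 = 4 Re (E conj V).  The Phi part of this
  vanishes entrywise, and the [C, W] part sums to
  4 Re (i a <[C, W], Gamma + W>) = 0, because the circulant matrix Gamma
  commutes with the circulant C and <[C, W], W> is real.  The trace is
  conserved because [C, W] is traceless and Phi has zero diagonal.
*)
theory Submission
  imports Defs "HOL-Library.Periodic_Fun"
begin

section \<open>Commutators with a real symmetric matrix\<close>

text \<open>\<open>(C X - X C\<^sup>T) i j\<close>: the commutator \<open>[C, X]\<close> when \<open>C\<close> is symmetric.\<close>

definition commutator ::
  "nat \<Rightarrow> (nat \<Rightarrow> nat \<Rightarrow> real) \<Rightarrow> (nat \<Rightarrow> nat \<Rightarrow> complex) \<Rightarrow> nat \<Rightarrow> nat \<Rightarrow> complex" where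
  "commutator N C X i j = (\<Sum>k<N. of_real (C i k) * X k j) - (\<Sum>k<N. of_real (C j k) * X i k)"

definition frobenius_inner ::
  "nat \<Rightarrow> (nat \<Rightarrow> nat \<Rightarrow> complex) \<Rightarrow> (nat \<Rightarrow> nat \<Rightarrow> complex) \<Rightarrow> complex" where
  "frobenius_inner N X Y = (\<Sum>i<N. \<Sum>j<N. X i j * cnj (Y i j))"

lemma DH_eq_commutator: "DH N h = commutator N (Cmat N h)"
  by (simp add: fun_eq_iff DH_def commutator_def)

lemma cnj_frobenius_inner: "cnj (frobenius_inner N X Y) = frobenius_inner N Y X"
  by (simp add: frobenius_inner_def mult.commute)

lemma frobenius_inner_add_right:
  "frobenius_inner N X (\<lambda>i j. Y i j + Z i j) = frobenius_inner N X Y + frobenius_inner N X Z"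
  by (simp add: frobenius_inner_def distrib_left sum.distrib)

lemma frobenius_inner_commutator:
  assumes C_sym: "\<forall>i<N. \<forall>k<N. C i k = C k i"
  shows "frobenius_inner N (commutator N C X) Y = frobenius_inner N X (commutator N C Y)"
proof -
  have swap: "(\<Sum>i<N. \<Sum>k<N. of_real (C i k) * (x k * y i))
      = (\<Sum>i<N. \<Sum>k<N. x i * (of_real (C i k) * y k))" for x y :: "nat \<Rightarrow> complex"
    by (subst sum.swap) (use C_sym in \<open>auto intro!: sum.cong simp: ac_simps\<close>)
  have left: "(\<Sum>i<N. \<Sum>j<N. (\<Sum>k<N. of_real (C i k) * X k j) * cnj (Y i j))
      = (\<Sum>i<N. \<Sum>j<N. X i j * cnj (\<Sum>k<N. of_real (C i k) * Y k j))"
  proof -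
    have "(\<Sum>i<N. \<Sum>j<N. (\<Sum>k<N. of_real (C i k) * X k j) * cnj (Y i j))
        = (\<Sum>j<N. \<Sum>i<N. \<Sum>k<N. of_real (C i k) * (X k j * cnj (Y i j)))"
      by (subst sum.swap) (simp add: sum_distrib_right mult.assoc)
    also have "\<dots> = (\<Sum>j<N. \<Sum>i<N. \<Sum>k<N. X i j * (of_real (C i k) * cnj (Y k j)))"
      by (intro sum.cong refl swap)
    finally show ?thesis
      by (subst (asm) sum.swap) (simp add: sum_distrib_left)
  qed
  have right: "(\<Sum>i<N. \<Sum>j<N. (\<Sum>k<N. of_real (C j k) * X i k) * cnj (Y i j))
      = (\<Sum>i<N. \<Sum>j<N. X i j * cnj (\<Sum>k<N. of_real (C j k) * Y i k))"
    by (rule sum.cong[OF refl]) (simp add: sum_distrib_left sum_distrib_right mult.assoc swap)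
  show ?thesis
    using left right
    by (simp add: frobenius_inner_def commutator_def left_diff_distrib right_diff_distrib sum_subtractf)
qed

lemma Im_frobenius_inner_commutator_self:
  assumes "\<forall>i<N. \<forall>k<N. C i k = C k i"
  shows "Im (frobenius_inner N (commutator N C X) X) = 0"
proof -
  have "frobenius_inner N (commutator N C X) X = cnj (frobenius_inner N (commutator N C X) X)"
    by (simp add: frobenius_inner_commutator[OF assms] cnj_frobenius_inner)
  then show ?thesis
    by (metis cnj.sel(2) neg_equal_zero)
qed

lemma trace_commutator:
  assumes "\<forall>i<N. \<forall>k<N. C i k = C k i"
  shows "(\<Sum>i<N. commutator N C X i i) = 0"
proof -
  have "(\<Sum>i<N. \<Sum>k<N. of_real (C i k) * X k i) = (\<Sum>k<N. \<Sum>i<N. of_real (C k i) * X k i)"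
    by (subst sum.swap) (use assms in \<open>auto intro!: sum.cong\<close>)
  then show ?thesis
    by (simp add: commutator_def sum_subtractf)
qed

lemma commutator_conj_transpose:
  "commutator N C (\<lambda>i j. cnj (X j i)) i j = - cnj (commutator N C X j i)"
  by (simp add: commutator_def)

lemma commutator_diff:
  "commutator N C (\<lambda>i j. X i j - Y i j) i j = commutator N C X i j - commutator N C Y i j"
  by (simp add: commutator_def algebra_simps sum_subtractf)

section \<open>The implicit half step\<close>

definition hermitian :: "nat \<Rightarrow> (nat \<Rightarrow> nat \<Rightarrow> complex) \<Rightarrow> bool" where
  "hermitian N X \<longleftrightarrow> (\<forall>i<N. \<forall>j<N. X i j = cnj (X j i))"

definition real_skew :: "nat \<Rightarrow> (nat \<Rightarrow> nat \<Rightarrow> complex) \<Rightarrow> bool" where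
  "real_skew N P \<longleftrightarrow> (\<forall>i<N. \<forall>j<N. Im (P i j) = 0 \<and> P i j = - P j i)"

text \<open>The left-hand side of the implicit half step, with \<open>a = p \<tau> / 2\<close> and \<open>b = q \<tau> / 2\<close>.\<close>

definition cn_operator :: "nat \<Rightarrow> (nat \<Rightarrow> nat \<Rightarrow> real) \<Rightarrow> real \<Rightarrow> real \<Rightarrow> (nat \<Rightarrow> nat \<Rightarrow> complex)
    \<Rightarrow> (nat \<Rightarrow> nat \<Rightarrow> complex) \<Rightarrow> nat \<Rightarrow> nat \<Rightarrow> complex" where
  "cn_operator N C a b P X i j =
     X i j - \<i> * of_real a * commutator N C X i j - \<i> * of_real b * P i j * X i j"

lemma cn_operator_diff:
  "cn_operator N C a b P (\<lambda>i j. X i j - Y i j) i j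
     = cn_operator N C a b P X i j - cn_operator N C a b P Y i j"
  by (simp add: cn_operator_def commutator_diff algebra_simps)

lemma cn_operator_conj_transpose:
  assumes "real_skew N P" "i < N" "j < N"
  shows "cn_operator N C a b P (\<lambda>i j. cnj (X j i)) i j = cnj (cn_operator N C a b P X j i)"
proof -
  have "Im (P j i) = 0" "P j i = - P i j"
    using assms unfolding real_skew_def by blast+
  then have "cnj (P j i) = - P i j"
    by (simp add: complex_eq_iff)
  then show ?thesis
    by (simp add: cn_operator_def commutator_conj_transpose algebra_simps)
qed

lemma Re_frobenius_inner_cn_operator:
  assumes "\<forall>i<N. \<forall>k<N. C i k = C k i" and "\<forall>i<N. \<forall>j<N. Im (P i j) = 0"
  shows "Re (frobenius_inner N (cn_operator N C a b P X) X) = (\<Sum>i<N. \<Sum>j<N. (cmod (X i j))\<^sup>2)"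
proof -
  have entry: "Re (cn_operator N C a b P X i j * cnj (X i j))
      = (cmod (X i j))\<^sup>2 + a * Im (commutator N C X i j * cnj (X i j))" if "i < N" "j < N" for i j
  proof -
    have "P i j = of_real (Re (P i j))"
      using assms(2) that by (simp add: complex_eq_iff)
    then obtain r where "P i j = of_real r"
      by blast
    then show ?thesis
      by (simp add: cn_operator_def algebra_simps flip: complex_norm_square)
  qed
  have "Re (frobenius_inner N (cn_operator N C a b P X) X)
      = (\<Sum>i<N. \<Sum>j<N. Re (cn_operator N C a b P X i j * cnj (X i j)))"
    by (simp add: frobenius_inner_def Re_sum)
  also have "\<dots> = (\<Sum>i<N. \<Sum>j<N. (cmod (X i j))\<^sup>2 + a * Im (commutator N C X i j * cnj (X i j)))"
    by (intro sum.cong refl entry) auto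
  also have "\<dots> = (\<Sum>i<N. \<Sum>j<N. (cmod (X i j))\<^sup>2) + a * Im (frobenius_inner N (commutator N C X) X)"
    by (simp add: frobenius_inner_def Im_sum sum.distrib sum_distrib_left)
  finally show ?thesis
    by (simp add: Im_frobenius_inner_commutator_self[OF assms(1)])
qed

lemma cn_operator_injective:
  assumes "\<forall>i<N. \<forall>k<N. C i k = C k i" and "\<forall>i<N. \<forall>j<N. Im (P i j) = 0"
    and "\<forall>i<N. \<forall>j<N. cn_operator N C a b P X i j = 0"
  shows "\<forall>i<N. \<forall>j<N. X i j = 0"
proof -
  have "(\<Sum>i<N. \<Sum>j<N. (cmod (X i j))\<^sup>2) = 0"
    using Re_frobenius_inner_cn_operator[OF assms(1,2), of a b X] assms(3)
    by (simp add: frobenius_inner_def)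
  then have "\<forall>i<N. (\<Sum>j<N. (cmod (X i j))\<^sup>2) = 0"
    by (subst (asm) sum_nonneg_eq_0_iff) (auto intro: sum_nonneg)
  then show ?thesis
    by (simp add: sum_nonneg_eq_0_iff)
qed

lemma cn_solution_hermitian:
  assumes C_sym: "\<forall>i<N. \<forall>k<N. C i k = C k i" and P: "real_skew N P" and R: "hermitian N R"
    and W: "\<forall>i<N. \<forall>j<N. cn_operator N C a b P W i j = R i j"
  shows "hermitian N W"
proof -
  define W' where "W' = (\<lambda>i j. cnj (W j i))"
  \<comment> \<open>\<open>W'\<close> solves the same equation, so it equals \<open>W\<close>.\<close>
  have "cn_operator N C a b P (\<lambda>i j. W i j - W' i j) i j = 0" if "i < N" "j < N" for i j
  proof -
    have "cn_operator N C a b P W' i j = cnj (R j i)"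
      using W that unfolding W'_def cn_operator_conj_transpose[OF P that] by simp
    also have "\<dots> = R i j"
      using R that unfolding hermitian_def by (metis complex_cnj_cnj)
    also have "\<dots> = cn_operator N C a b P W i j"
      using W that by simp
    finally show ?thesis
      unfolding cn_operator_diff by simp
  qed
  moreover have "\<forall>i<N. \<forall>j<N. Im (P i j) = 0"
    using P unfolding real_skew_def by blast
  ultimately have "\<forall>i<N. \<forall>j<N. W i j - W' i j = 0"
    using cn_operator_injective[OF C_sym] by blast
  then show ?thesis
    unfolding hermitian_def W'_def right_minus_eq by blast
qed

lemma cn_step_energy:
  assumes C_sym: "\<forall>i<N. \<forall>k<N. C i k = C k i" and P: "\<forall>i<N. \<forall>j<N. Im (P i j) = 0"
    and \<Gamma>_comm: "\<forall>i<N. \<forall>j<N. commutator N C \<Gamma> i j = 0"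
    and W: "\<forall>i<N. \<forall>j<N. cn_operator N C a b P W i j = U i j + \<i> * of_real b * \<Gamma> i j * P i j"
    and V: "\<forall>i<N. \<forall>j<N. V i j = 2 * W i j - U i j"
  shows "(\<Sum>i<N. \<Sum>j<N. (cmod (\<Gamma> i j + V i j))\<^sup>2) = (\<Sum>i<N. \<Sum>j<N. (cmod (\<Gamma> i j + U i j))\<^sup>2)"
proof -
  define Y where "Y = (\<lambda>i j. \<Gamma> i j + W i j)"
  define Z where "Z = (\<lambda>i j. commutator N C W i j * cnj (Y i j))"
  have entry: "(cmod (\<Gamma> i j + V i j))\<^sup>2 = (cmod (\<Gamma> i j + U i j))\<^sup>2 - 4 * a * Im (Z i j)"
    if "i < N" "j < N" for i j
  proof -
    have "P i j = of_real (Re (P i j))"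
      using P that by (simp add: complex_eq_iff)
    then obtain r where r: "P i j = of_real r"
      by blast
    have u: "U i j = W i j - \<i> * of_real a * commutator N C W i j - \<i> * of_real (b * r) * Y i j"
      using W[rule_format, OF that] unfolding cn_operator_def r Y_def by (simp add: algebra_simps)
    show ?thesis
      unfolding V[rule_format, OF that] u Z_def Y_def cmod_power2
      by (simp add: power2_eq_square algebra_simps)
  qed
  have "(\<Sum>i<N. \<Sum>j<N. Z i j) = frobenius_inner N (commutator N C W) Y"
    by (simp add: Z_def frobenius_inner_def)
  also have "\<dots> = frobenius_inner N W (commutator N C \<Gamma>) + frobenius_inner N (commutator N C W) W"
    unfolding Y_def frobenius_inner_add_right frobenius_inner_commutator[OF C_sym, of W \<Gamma>] ..
  also have "frobenius_inner N W (commutator N C \<Gamma>) = 0"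
    using \<Gamma>_comm by (simp add: frobenius_inner_def)
  finally have "(\<Sum>i<N. \<Sum>j<N. Z i j) = frobenius_inner N (commutator N C W) W"
    by simp
  then have "Im (\<Sum>i<N. \<Sum>j<N. Z i j) = 0"
    by (simp add: Im_frobenius_inner_commutator_self[OF C_sym])
  moreover have "(\<Sum>i<N. \<Sum>j<N. (cmod (\<Gamma> i j + V i j))\<^sup>2)
      = (\<Sum>i<N. \<Sum>j<N. (cmod (\<Gamma> i j + U i j))\<^sup>2) - 4 * a * Im (\<Sum>i<N. \<Sum>j<N. Z i j)"
    by (simp add: entry sum_subtractf sum_distrib_left Im_sum)
  ultimately show ?thesis
    by simp
qed

lemma cn_step_trace:
  assumes C_sym: "\<forall>i<N. \<forall>k<N. C i k = C k i" and P: "\<forall>i<N. P i i = 0"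
    and W: "\<forall>i<N. \<forall>j<N. cn_operator N C a b P W i j = U i j + \<i> * of_real b * \<Gamma> i j * P i j"
    and V: "\<forall>i<N. \<forall>j<N. V i j = 2 * W i j - U i j"
  shows "(\<Sum>i<N. V i i) = (\<Sum>i<N. U i i)"
proof -
  have "V i i = U i i + 2 * \<i> * of_real a * commutator N C W i i" if "i < N" for i
  proof -
    have "W i i - \<i> * of_real a * commutator N C W i i = U i i"
      using W[rule_format, OF that that] P that by (simp add: cn_operator_def)
    then show ?thesis
      unfolding V[rule_format, OF that that] by (simp add: algebra_simps)
  qed
  then have "(\<Sum>i<N. V i i) = (\<Sum>i<N. U i i) + 2 * \<i> * of_real a * (\<Sum>i<N. commutator N C W i i)"
    by (simp add: sum.distrib sum_distrib_left)
  then show ?thesis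
    by (simp add: trace_commutator[OF C_sym])
qed

lemma hermitian_diag_real: "hermitian N V \<Longrightarrow> i < N \<Longrightarrow> Im (V i i) = 0"
  unfolding hermitian_def by (metis Reals_cnj_iff complex_is_Real_iff)

lemma real_skew_diag:
  assumes "real_skew N P" "i < N"
  shows "P i i = 0"
proof -
  have "P i i = - P i i"
    using assms unfolding real_skew_def by blast
  then show ?thesis
    by (simp add: eq_neg_iff_add_eq_0)
qed

lemma real_skew_relaxation_update:
  assumes V: "hermitian N V" and Q: "real_skew N Q"
    and F: "\<forall>i<N. \<forall>j<N. F i j = 2 * (V i i - V j j) - Q i j"
  shows "real_skew N F"
  unfolding real_skew_def
proof (intro allI impI conjI)
  fix i j assume ij: "i < N" "j < N"
  have "Im (Q i j) = 0" "Q i j = - Q j i"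
    using Q ij unfolding real_skew_def by blast+
  then show "Im (F i j) = 0" "F i j = - F j i"
    using F ij hermitian_diag_real[OF V] by simp_all
qed

lemma hermitian_cn_rhs:
  assumes U: "hermitian N U" and \<Gamma>: "hermitian N \<Gamma>" and P: "real_skew N P"
  shows "hermitian N (\<lambda>i j. U i j + \<i> * of_real b * \<Gamma> i j * P i j)"
  unfolding hermitian_def
proof (intro allI impI)
  fix i j assume ij: "i < N" "j < N"
  have "U i j = cnj (U j i)" "\<Gamma> i j = cnj (\<Gamma> j i)"
    using U \<Gamma> ij unfolding hermitian_def by blast+
  moreover have "Im (P j i) = 0" "P j i = - P i j"
    using P ij unfolding real_skew_def by blast+
  ultimately show "U i j + \<i> * of_real b * \<Gamma> i j * P i j
      = cnj (U j i + \<i> * of_real b * \<Gamma> j i * P j i)"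
    by (simp add: complex_eq_iff)
qed

lemma cn_scheme_symmetries:
  assumes C_sym: "\<forall>i<N. \<forall>k<N. C i k = C k i" and \<Gamma>: "hermitian N \<Gamma>"
    and U_0: "hermitian N (U 0)" and Phi_0: "real_skew N (Phi 0)"
    and Phi_Suc: "\<forall>n. \<forall>i<N. \<forall>j<N.
        Phi (Suc n) i j = 2 * (U (Suc n) i i - U (Suc n) j j) - Phi n i j"
    and Uh: "\<forall>n. \<forall>i<N. \<forall>j<N.
        cn_operator N C a b (Phi n) (Uh n) i j = U n i j + \<i> * of_real b * \<Gamma> i j * Phi n i j"
    and U_Suc: "\<forall>n. \<forall>i<N. \<forall>j<N. U (Suc n) i j = 2 * Uh n i j - U n i j"
  shows "hermitian N (U n) \<and> real_skew N (Phi n)"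
proof (induction n)
  case 0
  show ?case using U_0 Phi_0 by blast
next
  case (Suc n)
  then have "hermitian N (Uh n)"
    using cn_solution_hermitian[OF C_sym _ hermitian_cn_rhs[OF _ \<Gamma>]] Uh by blast
  moreover have "hermitian N (U n)"
    using Suc by blast
  ultimately have "hermitian N (U (Suc n))"
    unfolding hermitian_def using U_Suc by (metis complex_cnj_diff complex_cnj_mult complex_cnj_numeral)
  then show ?case
    using real_skew_relaxation_update Suc Phi_Suc by blast
qed

section \<open>The periodic kernel and the difference matrix\<close>

lemma Gam_eq_diff:
  assumes "periodic_fun_simple G L"
  shows "Gam L h G a b = G (of_int (int a - int b) * h)"
proof -
  interpret G: periodic_fun_simple G L
    by (fact assms)
  define \<xi> where "\<xi> = of_int (int a - int b) * h"
  have "rmod (grid L h a - grid L h b + L / 2) L - L / 2 = \<xi> + of_int (- \<lfloor>(\<xi> + L / 2) / L\<rfloor>) * L"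
    by (simp add: rmod_def grid_def \<xi>_def algebra_simps)
  then have "Gam L h G a b = G (\<xi> + of_int (- \<lfloor>(\<xi> + L / 2) / L\<rfloor>) * L)"
    by (simp add: Gam_def per_eval_def)
  also have "\<dots> = G \<xi>"
    by (rule G.plus_of_int)
  finally show ?thesis
    unfolding \<xi>_def .
qed

lemma Gam_cong_mod:
  assumes per: "periodic_fun_simple G L" and hN: "real N * h = L"
    and "(int a - int b) mod int N = (int c - int d) mod int N"
  shows "Gam L h G a b = Gam L h G c d"
proof -
  interpret G: periodic_fun_simple G L
    by (fact per)
  obtain m where "int a - int b = int c - int d + int N * m"
    using assms(3) by (metis mod_eq_dvd_iff dvdE diff_eq_eq add.commute)
  then have "real_of_int (int a - int b) = real_of_int (int c - int d) + real N * of_int m"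
    by (metis of_int_add of_int_mult of_int_of_nat_eq)
  then have "real_of_int (int a - int b) * h = (real_of_int (int c - int d) + real N * of_int m) * h"
    by (rule arg_cong)
  also have "\<dots> = real_of_int (int c - int d) * h + of_int m * L"
    by (simp add: hN[symmetric] algebra_simps)
  finally show ?thesis
    by (simp add: Gam_eq_diff[OF per] G.plus_of_int)
qed

lemma Gam_shift_mod:
  assumes per: "periodic_fun_simple G L" and hN: "real N * h = L" and "m \<le> N"
  shows "Gam L h G ((i + m) mod N) j = Gam L h G i ((j + N - m) mod N)"
proof (rule Gam_cong_mod[OF per hN])
  have "(int ((i + m) mod N) - int j) mod int N = (int (i + m) - int j) mod int N"
    by (simp add: of_nat_mod mod_diff_left_eq)
  moreover have "(int i - int ((j + N - m) mod N)) mod int N = (int i - int (j + N - m)) mod int N"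
    by (simp add: of_nat_mod mod_diff_right_eq)
  moreover have "int i - int (j + N - m) = (int (i + m) - int j) + (- 1) * int N"
    using assms(3) by simp
  ultimately show "(int ((i + m) mod N) - int j) mod int N = (int i - int ((j + N - m) mod N)) mod int N"
    by (metis mod_mult_self1)
qed

lemma hermitian_Gam:
  assumes per: "periodic_fun_simple G L" and G_sym: "\<forall>\<xi>. G (- \<xi>) = cnj (G \<xi>)"
  shows "hermitian N (Gam L h G)"
  unfolding hermitian_def Gam_eq_diff[OF per]
  by (metis G_sym minus_diff_eq mult_minus_left of_int_minus)

lemma Cmat_symmetric:
  assumes "2 \<le> N" "i < N" "k < N"
  shows "Cmat N h i k = Cmat N h k i"
proof -
  have mod2: "(a::nat) < 2 * N \<Longrightarrow> a mod N = (if a < N then a else a - N)" for a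
    by (simp add: le_mod_geq)
  have "(k = (i + 2) mod N) = (i = (k + N - 2) mod N)"
       "(k = (i + 1) mod N) = (i = (k + N - 1) mod N)"
       "(k = (i + N - 1) mod N) = (i = (k + 1) mod N)"
       "(k = (i + N - 2) mod N) = (i = (k + 2) mod N)"
    using assms by (simp_all add: mod2) arith+
  then show ?thesis
    using assms unfolding Cmat_def by (simp add: algebra_simps)
qed

lemma sum_Cmat_mult:
  fixes f :: "nat \<Rightarrow> complex"
  assumes "0 < N"
  shows "(\<Sum>k<N. of_real (Cmat N h i k) * f k) = of_real (1 / (12 * h\<^sup>2)) *
    (- f ((i + 2) mod N) + 16 * f ((i + 1) mod N) - 30 * f (i mod N)
     + 16 * f ((i + N - 1) mod N) - f ((i + N - 2) mod N))"
proof -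
  define E where "E k =
     - (if k = (i + 2) mod N then f k else 0) + (if k = (i + 1) mod N then 16 * f k else 0)
     - (if k = i mod N then 30 * f k else 0) + (if k = (i + N - 1) mod N then 16 * f k else 0)
     - (if k = (i + N - 2) mod N then f k else 0)" for k
  have "of_real (Cmat N h i k) * f k = of_real (1 / (12 * h\<^sup>2)) * E k" for k
    by (simp add: Cmat_def E_def algebra_simps)
  then have "(\<Sum>k<N. of_real (Cmat N h i k) * f k) = of_real (1 / (12 * h\<^sup>2)) * (\<Sum>k<N. E k)"
    by (simp only: sum_distrib_left)
  also have "(\<Sum>k<N. E k) = - f ((i + 2) mod N) + 16 * f ((i + 1) mod N) - 30 * f (i mod N)
     + 16 * f ((i + N - 1) mod N) - f ((i + N - 2) mod N)"
    unfolding E_def sum.distrib sum_subtractf sum_negf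
    using assms by (simp only: sum.delta finite_lessThan lessThan_iff mod_less_divisor if_True)
  finally show ?thesis .
qed

lemma commutator_Cmat_Gam:
  assumes per: "periodic_fun_simple G L" and hN: "real N * h = L" and N: "2 \<le> N"
    and "i < N" "j < N"
  shows "commutator N (Cmat N h) (Gam L h G) i j = 0"
proof -
  note shift = Gam_shift_mod[OF per hN]
  have shifted: "Gam L h G ((i + 2) mod N) j = Gam L h G i ((j + N - 2) mod N)"
       "Gam L h G ((i + 1) mod N) j = Gam L h G i ((j + N - 1) mod N)"
       "Gam L h G ((i + N - 1) mod N) j = Gam L h G i ((j + 1) mod N)"
       "Gam L h G ((i + N - 2) mod N) j = Gam L h G i ((j + 2) mod N)"
    using shift[of 2 i j] shift[of 1 i j] shift[of "N - 1" i j] shift[of "N - 2" i j] N by simp_all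
  have "0 < N"
    using N by simp
  then show ?thesis
    using assms unfolding commutator_def sum_Cmat_mult[OF \<open>0 < N\<close>] shifted
    by (simp add: algebra_simps)
qed

theorem proposition3p1:
  fixes L h \<tau> p q :: real and N :: nat
    and G :: "real \<Rightarrow> complex"
    and Phim :: "nat \<Rightarrow> nat \<Rightarrow> real"
    and U Uh Phi :: "nat \<Rightarrow> nat \<Rightarrow> nat \<Rightarrow> complex"
  assumes L_pos: "L > 0" and N_ge: "N \<ge> 5" and h_def: "h = L / real N"
    and tau_pos: "\<tau> > 0"
    and G_per: "\<forall>\<xi>. G (\<xi> + L) = G \<xi>"
    and G_sym: "\<forall>\<xi>. G (- \<xi>) = cnj (G \<xi>)"
    and U0_herm: "\<forall>i<N. \<forall>j<N. U 0 i j = cnj (U 0 j i)"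
    and Phim_anti: "\<forall>i<N. \<forall>j<N. Phim i j = - Phim j i"
    and Phi_0: "\<forall>i<N. \<forall>j<N.
        Phi 0 i j = 2 * (U 0 i i - U 0 j j) - complex_of_real (Phim i j)"
    and Phi_Suc: "\<forall>n. \<forall>i<N. \<forall>j<N.
        Phi (Suc n) i j = 2 * (U (Suc n) i i - U (Suc n) j j) - Phi n i j"
    and Uh_eq: "\<forall>n. \<forall>i<N. \<forall>j<N.
        Uh n i j - (\<i> * complex_of_real (p * \<tau> / 2)) * DH N h (Uh n) i j
          - (\<i> * complex_of_real (q * \<tau> / 2)) * Phi n i j * Uh n i j
        = U n i j + (\<i> * complex_of_real (q * \<tau> / 2)) * Gam L h G i j * Phi n i j"
    and U_Suc: "\<forall>n. \<forall>i<N. \<forall>j<N. U (Suc n) i j = 2 * Uh n i j - U n i j"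
  shows "\<forall>n. I0 N L h G (U (Suc n)) = I0 N L h G (U n)
            \<and> I1 N h (U (Suc n)) = I1 N h (U n)"
proof -
  have N: "2 \<le> N" and hN: "real N * h = L" and per: "periodic_fun_simple G L"
    using N_ge h_def G_per by (simp_all add: periodic_fun_simple_def)
  have C_sym: "\<forall>i<N. \<forall>k<N. Cmat N h i k = Cmat N h k i"
    using Cmat_symmetric[OF N] by blast
  have \<Gamma>_comm: "\<forall>i<N. \<forall>j<N. commutator N (Cmat N h) (Gam L h G) i j = 0"
    using commutator_Cmat_Gam[OF per hN N] by blast
  have Uh: "\<forall>n. \<forall>i<N. \<forall>j<N. cn_operator N (Cmat N h) (p * \<tau> / 2) (q * \<tau> / 2) (Phi n) (Uh n) i j
      = U n i j + \<i> * of_real (q * \<tau> / 2) * Gam L h G i j * Phi n i j"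
    using Uh_eq unfolding cn_operator_def DH_eq_commutator .
  have "real_skew N (\<lambda>i j. of_real (Phim i j))"
    unfolding real_skew_def using Phim_anti by (metis Im_complex_of_real of_real_minus)
  then have "real_skew N (Phi 0)"
    using real_skew_relaxation_update U0_herm Phi_0 unfolding hermitian_def by blast
  then have symmetries: "hermitian N (U n) \<and> real_skew N (Phi n)" for n
    using cn_scheme_symmetries[OF C_sym hermitian_Gam[OF per G_sym] _ _ Phi_Suc Uh U_Suc] U0_herm
    unfolding hermitian_def by blast
  show ?thesis
  proof (intro allI conjI)
    fix n
    have "\<forall>i<N. \<forall>j<N. Im (Phi n i j) = 0" "\<forall>i<N. Phi n i i = 0"
      using symmetries[of n] real_skew_diag unfolding real_skew_def by blast+
    then show "I0 N L h G (U (Suc n)) = I0 N L h G (U n)" "I1 N h (U (Suc n)) = I1 N h (U n)"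
      using cn_step_energy[OF C_sym _ \<Gamma>_comm spec[OF Uh, of n] spec[OF U_Suc, of n]]
        cn_step_trace[OF C_sym _ spec[OF Uh, of n] spec[OF U_Suc, of n]]
      unfolding I0_def I1_def by simp_all
  qed
qed

end
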